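(* For every function $f : X \to \mathbb{R}$ (with no measurability assumption), the game $\Gamma'(f)$ is determined.
   Context: Let $A$ be a non-empty countable set and $T$ a pruned tree on $A$ (a set of finite sequences of elements of $A$, closed under initial segments, in which every sequence has a proper extension in $T$). Let $X$ be the set of infinite branches of $T$, with the topology generated by the cylinder sets $O(s) = \{x \in X : s \text{ is an initial segment of } x\}$, $s \in T$. The game $\Gamma'(f)$: Player I and Player II alternate, Player I moving first; Player I plays $x_0, x_1, \dots \in A$ subject to $(x_0,\dots,x_t) \in T$ for all $t$, and after each move $x_t$ Player II plays a pair of reals $(v_t,w_t)$; Player II wins iff $f(x_0,x_1,\dots) = \limsup_t v_t = \liminf_t w_t$; otherwise Player I wins. Determined means one of the players has a winning strategy. *)

theory Defs
  imports "HOL-Analysis.Analysis" "HOL-Library.Liminf_Limsup"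
begin

definition prefix_seq :: "(nat \<Rightarrow> 'a) \<Rightarrow> nat \<Rightarrow> 'a list" where
  "prefix_seq x n = map x [0..<n]"

definition is_tree :: "'a set \<Rightarrow> 'a list set \<Rightarrow> bool" where
  "is_tree A T \<longleftrightarrow> T \<subseteq> lists A \<and> T \<noteq> {} \<and>
     (\<forall>s \<in> T. \<forall>n. take n s \<in> T)"

definition pruned_tree :: "'a set \<Rightarrow> 'a list set \<Rightarrow> bool" where
  "pruned_tree A T \<longleftrightarrow> is_tree A T \<and>
     (\<forall>s \<in> T. \<exists>t \<in> T. length s < length t \<and> take (length s) t = s)"

definition branches :: "'a list set \<Rightarrow> (nat \<Rightarrow> 'a) set" where
  "branches T = {x. \<forall>n. prefix_seq x n \<in> T}"

definition II_wins :: "((nat \<Rightarrow> 'a) \<Rightarrow> real) \<Rightarrow> (nat \<Rightarrow> 'a) \<Rightarrow> (nat \<Rightarrow> real \<times> real) \<Rightarrow> bool" where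
  "II_wins f x vw \<longleftrightarrow>
     ereal (f x) = limsup (\<lambda>t. ereal (fst (vw t))) \<and>
     ereal (f x) = liminf (\<lambda>t. ereal (snd (vw t)))"

text \<open>A strategy for Player I maps the history (x_0..x_{t-1}; (v_0,w_0)..(v_{t-1},w_{t-1}))
 to the next move x_t.  A strategy for Player II maps the history
 (x_0..x_t; (v_0,w_0)..(v_{t-1},w_{t-1})) to the move (v_t,w_t).\<close>
type_synonym 'a stratI = "'a list \<Rightarrow> (real \<times> real) list \<Rightarrow> 'a"
type_synonym 'a stratII = "'a list \<Rightarrow> (real \<times> real) list \<Rightarrow> real \<times> real"

definition winning_I :: "'a list set \<Rightarrow> ((nat \<Rightarrow> 'a) \<Rightarrow> real) \<Rightarrow> 'a stratI \<Rightarrow> bool" where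
  "winning_I T f \<sigma> \<longleftrightarrow>
     (\<forall>x vw. (\<forall>t. x t = \<sigma> (prefix_seq x t) (prefix_seq vw t)) \<longrightarrow>
        x \<in> branches T \<and> \<not> II_wins f x vw)"

definition winning_II :: "'a list set \<Rightarrow> ((nat \<Rightarrow> 'a) \<Rightarrow> real) \<Rightarrow> 'a stratII \<Rightarrow> bool" where
  "winning_II T f \<tau> \<longleftrightarrow>
     (\<forall>x vw. x \<in> branches T \<longrightarrow>
        (\<forall>t. vw t = \<tau> (prefix_seq x (Suc t)) (prefix_seq vw t)) \<longrightarrow>
        II_wins f x vw)"

definition determined_Gamma' :: "'a list set \<Rightarrow> ((nat \<Rightarrow> 'a) \<Rightarrow> real) \<Rightarrow> bool" where
  "determined_Gamma' T f \<longleftrightarrow> (\<exists>\<sigma>. winning_I T f \<sigma>) \<or> (\<exists>\<tau>. winning_II T f \<tau>)"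

end

theory Submission
  imports Defs
begin

text \<open>
  Call a nonempty set P of branches an obstruction for f if, for some \<alpha> < \<beta>, both
  {f < \<alpha>} and {f > \<beta>} are dense in P. If there is one, Player I wins: he heads for a
  branch of P with f < \<alpha> until Player II plays some w t < \<alpha>, then for a branch of P
  through the current position with f > \<beta> until II plays some v t > \<beta>, and so on.
  If he switches only finitely often, the play is the last target, on which II's moves stay on
  the wrong side of f; otherwise liminf w \<le> \<alpha> < \<beta> \<le> limsup v.

  If there is no obstruction, then for every \<epsilon> > 0 the bounded function arctan \<circ> f is
  \<epsilon>-fragmented: every nonempty set of branches has a nonempty relatively open piece on which
  it oscillates by at most \<epsilon>. Removing the points without such a piece, transfinitely,
  stratifies the branches, and the stratum of the current cylinder gives an \<epsilon>-approximation
  of arctan (f x) that depends only on the finite position. Diagonalising over \<epsilon> = 1/(m+1)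
  yields moves v t = w t converging to f x, so Player II wins.
\<close>

lemma frequently_change:
  fixes p :: "nat \<Rightarrow> bool"
  assumes "frequently p sequentially" and "frequently (\<lambda>t. \<not> p t) sequentially"
  shows "frequently (\<lambda>t. p t \<and> \<not> p (Suc t)) sequentially"
  unfolding frequently_sequentially
proof
  fix N
  obtain t1 where t1: "N \<le> t1" "p t1"
    using assms(1) by (auto simp: frequently_sequentially)
  obtain t2 where t2: "t1 \<le> t2" "\<not> p t2"
    using assms(2) by (auto simp: frequently_sequentially)
  define m where "m = (LEAST t. t1 \<le> t \<and> \<not> p t)"
  have m: "t1 \<le> m" "\<not> p m"
    using LeastI[of "\<lambda>t. t1 \<le> t \<and> \<not> p t", OF conjI[OF t2]] unfolding m_def by auto
  then obtain k where k: "m = Suc k" "t1 \<le> k"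
    using t1(2) by (metis le_SucE less_eq_Suc_le not0_implies_Suc le_0_eq)
  have "p k"
    using not_less_Least[of k "\<lambda>t. t1 \<le> t \<and> \<not> p t"] k unfolding m_def by auto
  then show "\<exists>t\<ge>N. p t \<and> \<not> p (Suc t)"
    using k m t1 by (metis order_trans)
qed

lemma Liminf_le_if_frequently:
  fixes X :: "nat \<Rightarrow> 'b :: complete_linorder"
  assumes "frequently (\<lambda>t. X t < c) sequentially"
  shows "liminf X \<le> c"
proof (rule ccontr)
  assume "\<not> liminf X \<le> c"
  then have "eventually (\<lambda>t. c < X t) sequentially"
    using le_Liminf_iff[of "liminf X" sequentially X] by auto
  then have "eventually (\<lambda>t. \<not> X t < c) sequentially"
    by (rule eventually_mono) auto
  then show False
    using assms by (simp add: frequently_def)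
qed

lemma le_Limsup_if_frequently:
  fixes X :: "nat \<Rightarrow> 'b :: complete_linorder"
  assumes "frequently (\<lambda>t. c < X t) sequentially"
  shows "c \<le> limsup X"
proof (rule ccontr)
  assume "\<not> c \<le> limsup X"
  then have "eventually (\<lambda>t. X t < c) sequentially"
    using Limsup_le_iff[of sequentially X "limsup X"] by auto
  then have "eventually (\<lambda>t. \<not> c < X t) sequentially"
    by (rule eventually_mono) auto
  then show False
    using assms by (simp add: frequently_def)
qed

lemma length_prefix_seq [simp]: "length (prefix_seq x n) = n"
  by (simp add: prefix_seq_def)

lemma nth_prefix_seq [simp]: "i < n \<Longrightarrow> prefix_seq x n ! i = x i"
  by (simp add: prefix_seq_def)

lemma prefix_seq_0 [simp]: "prefix_seq x 0 = []"
  by (simp add: prefix_seq_def)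

lemma prefix_seq_eq_iff: "prefix_seq x n = prefix_seq y n \<longleftrightarrow> (\<forall>i<n. x i = y i)"
  by (auto simp: prefix_seq_def)

lemma prefix_seq_eq_le: "prefix_seq x n = prefix_seq y n \<Longrightarrow> m \<le> n \<Longrightarrow> prefix_seq x m = prefix_seq y m"
  by (auto simp: prefix_seq_eq_iff)

definition cylinder :: "(nat \<Rightarrow> 'a) set \<Rightarrow> 'a list \<Rightarrow> (nat \<Rightarrow> 'a) set" where
  "cylinder P s = {y \<in> P. prefix_seq y (length s) = s}"

lemma mem_cylinder_prefix_seq [simp]:
  "y \<in> cylinder P (prefix_seq x n) \<longleftrightarrow> y \<in> P \<and> prefix_seq y n = prefix_seq x n"
  by (simp add: cylinder_def)

lemma cylinder_Nil [simp]: "cylinder P [] = P"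
  by (simp add: cylinder_def)

lemma cylinder_eq_cylinder_prefix_seq:
  "y \<in> cylinder P s \<Longrightarrow> cylinder P s = cylinder P (prefix_seq y (length s))"
  by (auto simp: cylinder_def)

definition rel_dense :: "(nat \<Rightarrow> 'a) set \<Rightarrow> (nat \<Rightarrow> 'a) set \<Rightarrow> bool" where
  "rel_dense Y P \<longleftrightarrow> (\<forall>x\<in>P. \<forall>n. cylinder P (prefix_seq x n) \<inter> Y \<noteq> {})"

lemma rel_dense_cylinder:
  assumes "rel_dense Y P" and "y \<in> cylinder P s"
  shows "cylinder P s \<inter> Y \<noteq> {}"
  using assms cylinder_eq_cylinder_prefix_seq[OF assms(2)]
  unfolding rel_dense_def cylinder_def by auto

definition obstruction :: "'a list set \<Rightarrow> ((nat \<Rightarrow> 'a) \<Rightarrow> real) \<Rightarrow> bool" where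
  "obstruction T f \<longleftrightarrow> (\<exists>P \<alpha> \<beta>. P \<subseteq> branches T \<and> P \<noteq> {} \<and> \<alpha> < \<beta> \<and>
     rel_dense {y. f y < \<alpha>} P \<and> rel_dense {y. \<beta> < f y} P)"

section \<open>Player I wins in the presence of an obstruction\<close>

lemma II_wins_limits:
  "II_wins f x vw \<Longrightarrow>
     limsup (\<lambda>t. ereal (fst (vw t))) = ereal (f x) \<and> liminf (\<lambda>t. ereal (snd (vw t))) = ereal (f x)"
  unfolding II_wins_def by (metis (no_types))

locale obstructed_game =
  fixes T :: "'a list set" and f :: "(nat \<Rightarrow> 'a) \<Rightarrow> real"
    and P :: "(nat \<Rightarrow> 'a) set" and \<alpha> \<beta> :: real
  assumes P_branches: "P \<subseteq> branches T" and P_nonempty: "P \<noteq> {}" and less: "\<alpha> < \<beta>"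
    and dense_low: "rel_dense {y. f y < \<alpha>} P" and dense_high: "rel_dense {y. \<beta> < f y} P"
begin

definition aim :: "bool \<Rightarrow> (nat \<Rightarrow> 'a) \<Rightarrow> bool" where
  "aim low y \<longleftrightarrow> (if low then f y < \<alpha> else \<beta> < f y)"

definition switch :: "bool \<Rightarrow> real \<times> real \<Rightarrow> bool" where
  "switch low vw \<longleftrightarrow> (if low then snd vw < \<alpha> else \<beta> < fst vw)"

definition target :: "bool \<Rightarrow> 'a list \<Rightarrow> nat \<Rightarrow> 'a" where
  "target low s = (SOME y. y \<in> cylinder P s \<and> aim low y)"

lemma target:
  assumes "y \<in> cylinder P s"
  shows "target low s \<in> cylinder P s \<and> aim low (target low s)"
proof -
  have "\<exists>y. y \<in> cylinder P s \<and> aim low y"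
  proof (cases low)
    case True
    then show ?thesis
      using rel_dense_cylinder[OF dense_low assms] by (auto simp: aim_def)
  next
    case False
    then show ?thesis
      using rel_dense_cylinder[OF dense_high assms] by (auto simp: aim_def)
  qed
  then show ?thesis
    unfolding target_def by (rule someI_ex)
qed

primrec state :: "nat \<Rightarrow> (nat \<Rightarrow> 'a) \<Rightarrow> (nat \<Rightarrow> real \<times> real) \<Rightarrow> bool \<times> (nat \<Rightarrow> 'a)" where
  "state 0 x vw = (True, target True [])"
| "state (Suc t) x vw =
     (let low = fst (state t x vw) in
      if switch low (vw t) then (\<not> low, target (\<not> low) (prefix_seq x (Suc t))) else state t x vw)"

lemma state_prefix_seq:
  "(\<forall>i<t. x i = x' i) \<Longrightarrow> (\<forall>i<t. vw i = vw' i) \<Longrightarrow> state t x vw = state t x' vw'"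
proof (induction t)
  case (Suc t)
  then have "prefix_seq x (Suc t) = prefix_seq x' (Suc t)"
    by (simp add: prefix_seq_eq_iff)
  with Suc show ?case
    by (simp add: Let_def)
qed simp

definition strategy :: "'a stratI" where
  "strategy xs vws = snd (state (length xs) ((!) xs) ((!) vws)) (length xs)"

lemma consistent_play_state:
  assumes "\<forall>t. x t = strategy (prefix_seq x t) (prefix_seq vw t)"
  shows "x t = snd (state t x vw) t"
  using assms state_prefix_seq[of t "(!) (prefix_seq x t)" x "(!) (prefix_seq vw t)" vw]
  by (simp add: strategy_def)

lemma state_invariant:
  assumes play: "\<And>t. x t = snd (state t x vw) t"
  shows "snd (state t x vw) \<in> cylinder P (prefix_seq x t) \<and> aim (fst (state t x vw)) (snd (state t x vw))"
proof (induction t)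
  case 0
  then show ?case
    using P_nonempty target[of _ "[]"] by auto
next
  case (Suc t)
  have "snd (state t x vw) \<in> cylinder P (prefix_seq x (Suc t))"
    using Suc.IH play[of t] by (simp add: prefix_seq_eq_iff less_Suc_eq)
  with target[OF this] show ?case
    using Suc.IH by (simp add: Let_def)
qed

lemma switch_if_phase_changes:
  "fst (state (Suc t) x vw) \<noteq> fst (state t x vw) \<Longrightarrow> switch (fst (state t x vw)) (vw t)"
  by (auto simp: Let_def split: if_splits)

lemma stable_phase_not_II_wins:
  assumes play: "\<And>t. x t = snd (state t x vw) t"
    and stable: "eventually (\<lambda>t. fst (state t x vw) = low) sequentially"
  shows "\<not> II_wins f x vw"
proof -
  obtain T0 where T0: "\<And>t. T0 \<le> t \<Longrightarrow> fst (state t x vw) = low"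
    using stable by (auto simp: eventually_sequentially)
  have step: "\<not> switch low (vw t) \<and> state (Suc t) x vw = state t x vw" if "T0 \<le> t" for t
    using T0[of t] T0[of "Suc t"] that by (auto simp: Let_def split: if_splits)
  have const: "state t x vw = state T0 x vw" if "T0 \<le> t" for t
    using that by (induction rule: dec_induct) (metis step)+
  define y where "y = snd (state T0 x vw)"
  have "x = y"
  proof
    fix i
    have "y \<in> cylinder P (prefix_seq x (max T0 (Suc i)))"
      using state_invariant[OF play, of "max T0 (Suc i)"] const[of "max T0 (Suc i)"] y_def by simp
    then show "x i = y i"
      by (auto simp: prefix_seq_eq_iff)
  qed
  then have aim: "aim low x"
    using state_invariant[OF play, of T0] T0[of T0] y_def by simp
  have no_switch: "eventually (\<lambda>t. \<not> switch low (vw t)) sequentially"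
    using step by (auto simp: eventually_sequentially)
  show ?thesis
  proof (cases low)
    case True
    then have "eventually (\<lambda>t. ereal \<alpha> \<le> ereal (snd (vw t))) sequentially"
      using no_switch by (auto simp: switch_def elim: eventually_mono)
    then have "ereal \<alpha> \<le> liminf (\<lambda>t. ereal (snd (vw t)))"
      by (rule Liminf_bounded)
    then show ?thesis
      using aim True II_wins_limits[of f x vw] by (auto simp: aim_def)
  next
    case False
    then have "eventually (\<lambda>t. ereal (fst (vw t)) \<le> ereal \<beta>) sequentially"
      using no_switch by (auto simp: switch_def elim: eventually_mono)
    then have "limsup (\<lambda>t. ereal (fst (vw t))) \<le> ereal \<beta>"
      by (rule Limsup_bounded)
    then show ?thesis
      using aim False II_wins_limits[of f x vw] by (auto simp: aim_def)
  qed
qed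

lemma frequent_switches_not_II_wins:
  assumes "frequently (\<lambda>t. switch True (vw t)) sequentially"
    and "frequently (\<lambda>t. switch False (vw t)) sequentially"
  shows "\<not> II_wins f x vw"
proof -
  have "liminf (\<lambda>t. ereal (snd (vw t))) \<le> ereal \<alpha>"
    using assms(1) by (intro Liminf_le_if_frequently) (simp add: switch_def)
  moreover have "ereal \<beta> \<le> limsup (\<lambda>t. ereal (fst (vw t)))"
    using assms(2) by (intro le_Limsup_if_frequently) (simp add: switch_def)
  ultimately show ?thesis
    using less II_wins_limits[of f x vw] by auto
qed

lemma strategy_winning: "winning_I T f strategy"
  unfolding winning_I_def
proof (intro allI impI conjI)
  fix x vw
  assume "\<forall>t. x t = strategy (prefix_seq x t) (prefix_seq vw t)"
  then have play: "\<And>t. x t = snd (state t x vw) t"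
    by (rule consistent_play_state)
  show "x \<in> branches T"
    unfolding branches_def
  proof (intro CollectI allI)
    fix n
    have "snd (state n x vw) \<in> cylinder P (prefix_seq x n)"
      using state_invariant[OF play] by blast
    then have "snd (state n x vw) \<in> branches T" and "prefix_seq (snd (state n x vw)) n = prefix_seq x n"
      using P_branches by auto
    then show "prefix_seq x n \<in> T"
      unfolding branches_def by (metis mem_Collect_eq)
  qed
  define phase where "phase t = fst (state t x vw)" for t
  show "\<not> II_wins f x vw"
  proof (cases "frequently phase sequentially \<and> frequently (\<lambda>t. \<not> phase t) sequentially")
    case True
    have switch: "switch (phase t) (vw t)" if "phase (Suc t) \<noteq> phase t" for t
      using that unfolding phase_def by (rule switch_if_phase_changes)
    have "frequently (\<lambda>t. phase t \<and> \<not> phase (Suc t)) sequentially"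
      using True by (intro frequently_change) auto
    then have "frequently (\<lambda>t. switch True (vw t)) sequentially"
      by (rule frequently_elim1) (use switch in force)
    moreover have "frequently (\<lambda>t. \<not> phase t \<and> \<not> \<not> phase (Suc t)) sequentially"
      using True by (intro frequently_change[of "\<lambda>t. \<not> phase t"]) simp_all
    then have "frequently (\<lambda>t. switch False (vw t)) sequentially"
      by (rule frequently_elim1) (use switch in force)
    ultimately show ?thesis
      by (rule frequent_switches_not_II_wins)
  next
    case False
    then have "eventually (\<lambda>t. phase t = False) sequentially \<or> eventually (\<lambda>t. phase t = True) sequentially"
      by (simp add: not_frequently)
    then obtain low where "eventually (\<lambda>t. fst (state t x vw) = low) sequentially"
      unfolding phase_def by blast
    then show ?thesis
      using stable_phase_not_II_wins[OF play] by blast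
  qed
qed

end

section \<open>Derivative towers\<close>

text \<open>
  The transfinite sequence X, D X, D (D X), \<dots>, intersected at limit stages, obtained without
  ordinals as the least family closed under D and under intersections relative to X.
\<close>

inductive_set tower :: "'b set \<Rightarrow> ('b set \<Rightarrow> 'b set) \<Rightarrow> 'b set set" for X D where
  tower_derive: "P \<in> tower X D \<Longrightarrow> D P \<in> tower X D"
| tower_Inter: "\<forall>P\<in>C. P \<in> tower X D \<Longrightarrow> X \<inter> \<Inter>C \<in> tower X D"

definition layer :: "'b set \<Rightarrow> ('b set \<Rightarrow> 'b set) \<Rightarrow> 'b set \<Rightarrow> 'b set" where
  "layer X D S = (SOME P. P \<in> tower X D \<and> S \<inter> P \<noteq> {} \<and> S \<inter> D P = {})"

context
  fixes D :: "'b set \<Rightarrow> 'b set"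
  assumes deflationary: "\<And>P. D P \<subseteq> P"
begin

lemma tower_subset: "P \<in> tower X D \<Longrightarrow> P \<subseteq> X"
  by (induction rule: tower.induct) (use deflationary in blast)+

lemma tower_comparable_with_gap:
  assumes M: "M \<in> tower X D" and gap: "\<forall>K\<in>tower X D. M \<subseteq> K \<longrightarrow> K = M \<or> M \<subseteq> D K"
  shows "N \<in> tower X D \<Longrightarrow> M \<subseteq> N \<or> N \<subseteq> D M"
proof (induction rule: tower.induct)
  case (tower_derive N)
  then show ?case
    using gap deflationary[of N] by blast
next
  case (tower_Inter C)
  show ?case
  proof (cases "\<forall>K\<in>C. M \<subseteq> K")
    case True
    then show ?thesis
      using tower_subset[OF M] by blast
  next
    case False
    then show ?thesis
      using tower_Inter.IH by blast
  qed
qed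

lemma tower_gap: "M \<in> tower X D \<Longrightarrow> \<forall>N\<in>tower X D. M \<subseteq> N \<longrightarrow> N = M \<or> M \<subseteq> D N"
proof (induction rule: tower.induct)
  case (tower_derive M)
  show ?case
  proof (intro ballI impI)
    fix N
    assume N: "N \<in> tower X D" and sub: "D M \<subseteq> N"
    have "M \<subseteq> N \<or> N \<subseteq> D M"
      using tower_comparable_with_gap[OF tower_derive.hyps tower_derive.IH N] .
    then show "N = D M \<or> D M \<subseteq> D N"
      using tower_derive.IH N sub deflationary[of M] by blast
  qed
next
  case (tower_Inter C)
  show ?case
  proof (intro ballI impI)
    fix N
    assume N: "N \<in> tower X D" and sub: "X \<inter> \<Inter>C \<subseteq> N"
    show "N = X \<inter> \<Inter>C \<or> X \<inter> \<Inter>C \<subseteq> D N"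
    proof (cases "\<forall>K\<in>C. N \<subseteq> K")
      case True
      then show ?thesis
        using tower_subset[OF N] sub by blast
    next
      case False
      then obtain K where K: "K \<in> C" "\<not> N \<subseteq> K"
        by blast
      then have "K \<subseteq> N \<or> N \<subseteq> D K"
        using tower_comparable_with_gap tower_Inter.IH N by blast
      then have "K \<subseteq> D N"
        using K tower_Inter.IH N deflationary[of K] by blast
      then show ?thesis
        using K(1) by blast
    qed
  qed
qed

lemma tower_linear: "M \<in> tower X D \<Longrightarrow> N \<in> tower X D \<Longrightarrow> M \<subseteq> N \<or> N \<subseteq> M"
  using tower_comparable_with_gap tower_gap deflationary by blast

lemma tower_point_layer:
  assumes shrinks: "\<And>Q. Q \<in> tower X D \<Longrightarrow> Q \<noteq> {} \<Longrightarrow> D Q \<noteq> Q" and "x \<in> X"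
  shows "\<exists>Q\<in>tower X D. x \<in> Q \<and> x \<notin> D Q"
proof -
  define Q where "Q = X \<inter> \<Inter>{P \<in> tower X D. x \<in> P}"
  have Q: "Q \<in> tower X D" "x \<in> Q"
    unfolding Q_def using \<open>x \<in> X\<close> by (auto intro: tower_Inter)
  have "x \<notin> D Q"
  proof
    assume "x \<in> D Q"
    then have "Q \<subseteq> D Q"
      using tower_derive[OF Q(1)] unfolding Q_def by blast
    then show False
      using shrinks[OF Q(1)] deflationary[of Q] Q(2) by blast
  qed
  then show ?thesis
    using Q by blast
qed

lemma layer_eq:
  assumes "P \<in> tower X D" and "S \<inter> P \<noteq> {}" and "S \<inter> D P = {}"
  shows "layer X D S = P"
proof -
  have unique: "Q = P" if "Q \<in> tower X D" "S \<inter> Q \<noteq> {}" "S \<inter> D Q = {}" for Q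
    using tower_linear[OF that(1) assms(1)] tower_gap[OF that(1)] tower_gap[OF assms(1)] that assms
    by blast
  have "layer X D S \<in> tower X D \<and> S \<inter> layer X D S \<noteq> {} \<and> S \<inter> D (layer X D S) = {}"
    unfolding layer_def by (rule someI[of _ P]) (use assms in blast)
  then show ?thesis
    using unique by blast
qed

end

section \<open>Player II wins in the absence of an obstruction\<close>

definition oscillation_le :: "('b \<Rightarrow> real) \<Rightarrow> 'b set \<Rightarrow> real \<Rightarrow> bool" where
  "oscillation_le g S \<epsilon> \<longleftrightarrow> (\<forall>y\<in>S. \<forall>z\<in>S. \<bar>g y - g z\<bar> \<le> \<epsilon>)"

definition rough_points :: "((nat \<Rightarrow> 'a) \<Rightarrow> real) \<Rightarrow> real \<Rightarrow> (nat \<Rightarrow> 'a) set \<Rightarrow> (nat \<Rightarrow> 'a) set" where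
  "rough_points g \<epsilon> P = {x \<in> P. \<forall>n. \<not> oscillation_le g (cylinder P (prefix_seq x n)) \<epsilon>}"

definition fragmented :: "((nat \<Rightarrow> 'a) \<Rightarrow> real) \<Rightarrow> real \<Rightarrow> (nat \<Rightarrow> 'a) set \<Rightarrow> bool" where
  "fragmented g \<epsilon> X \<longleftrightarrow>
     (\<forall>P\<subseteq>X. P \<noteq> {} \<longrightarrow> (\<exists>x\<in>P. \<exists>n. oscillation_le g (cylinder P (prefix_seq x n)) \<epsilon>))"

text \<open>
  The layer of a cylinder, the unique tower element meeting it whose derivative misses it,
  depends on the finite position s alone; this is what makes approx a legal move for Player II.
\<close>

definition approx :: "(nat \<Rightarrow> 'a) set \<Rightarrow> ((nat \<Rightarrow> 'a) \<Rightarrow> real) \<Rightarrow> real \<Rightarrow> 'a list \<Rightarrow> real" where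
  "approx X g \<epsilon> s = g (SOME y. y \<in> cylinder X s \<inter> layer X (rough_points g \<epsilon>) (cylinder X s))"

lemma rough_points_subset: "rough_points g \<epsilon> P \<subseteq> P"
  by (auto simp: rough_points_def)

lemma approx_eventually_close:
  assumes frag: "fragmented g \<epsilon> X" and "x \<in> X"
  shows "eventually (\<lambda>t. \<bar>approx X g \<epsilon> (prefix_seq x t) - g x\<bar> \<le> \<epsilon>) sequentially"
proof -
  let ?D = "rough_points g \<epsilon>"
  have "?D Q \<noteq> Q" if "Q \<in> tower X ?D" "Q \<noteq> {}" for Q
    using frag tower_subset[OF rough_points_subset that(1)] that(2)
    unfolding fragmented_def rough_points_def by blast
  then obtain Q where Q: "Q \<in> tower X ?D" "x \<in> Q" "x \<notin> ?D Q"
    using tower_point_layer[of ?D, OF rough_points_subset] \<open>x \<in> X\<close> by blast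
  then obtain n where n: "oscillation_le g (cylinder Q (prefix_seq x n)) \<epsilon>"
    by (auto simp: rough_points_def)
  have "\<bar>approx X g \<epsilon> (prefix_seq x t) - g x\<bar> \<le> \<epsilon>" if "n \<le> t" for t
  proof -
    let ?S = "cylinder X (prefix_seq x t)"
    have smooth: "cylinder Q (prefix_seq z n) = cylinder Q (prefix_seq x n)" if "z \<in> ?S" for z
      using prefix_seq_eq_le[of z t x n] that \<open>n \<le> t\<close> by auto
    have "z \<notin> ?D Q" if "z \<in> ?S" for z
      using n smooth[OF that] unfolding rough_points_def by (metis (mono_tags, lifting) mem_Collect_eq)
    then have "?S \<inter> ?D Q = {}"
      by blast
    moreover have "x \<in> ?S \<inter> Q"
      using Q(2) \<open>x \<in> X\<close> by simp
    ultimately have layer: "layer X ?D ?S = Q"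
      using layer_eq[OF rough_points_subset Q(1)] by blast
    define y where "y = (SOME y. y \<in> ?S \<inter> Q)"
    have "y \<in> ?S \<inter> Q"
      unfolding y_def some_in_eq using \<open>x \<in> ?S \<inter> Q\<close> by blast
    then have "y \<in> cylinder Q (prefix_seq x n)"
      using smooth[of y] by auto
    then have "\<bar>g y - g x\<bar> \<le> \<epsilon>"
      using n Q(2) by (simp add: oscillation_le_def)
    then show ?thesis
      by (simp add: approx_def layer y_def)
  qed
  then show ?thesis
    by (auto simp: eventually_sequentially)
qed

definition eps :: "nat \<Rightarrow> real" where
  "eps m = 1 / (real m + 1)"

text \<open>
  It eventually exceeds any fixed depth, which diagonalises the
  approximations over all precisions eps m at once.
\<close>

definition consistent_depth :: "(nat \<Rightarrow> real) \<Rightarrow> nat \<Rightarrow> nat" where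
  "consistent_depth a n = (GREATEST m. m \<le> n \<and> (\<forall>j\<le>m. \<forall>k\<le>m. \<bar>a j - a k\<bar> \<le> eps j + eps k))"

lemma eps_pos: "0 < eps m"
  by (simp add: eps_def)

lemma eps_antimono: "m \<le> M \<Longrightarrow> eps M \<le> eps m"
  by (simp add: eps_def frac_le)

lemma ex_three_eps_less: "0 < r \<Longrightarrow> \<exists>M. 3 * eps M < r"
proof -
  assume "0 < r"
  obtain M :: nat where "3 / r < real M"
    using reals_Archimedean2 by blast
  then have "3 < real M * r"
    using \<open>0 < r\<close> by (simp add: field_simps)
  then have "3 * eps M < r"
    using \<open>0 < r\<close> by (simp add: eps_def field_simps)
  then show ?thesis ..
qed

lemma tendsto_consistent_depth:
  assumes close: "\<And>m. eventually (\<lambda>t. \<bar>a t m - c\<bar> \<le> eps m) sequentially"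
    and n: "filterlim n at_top sequentially"
  shows "(\<lambda>t. a t (consistent_depth (a t) (n t))) \<longlonglongrightarrow> c"
  unfolding tendsto_iff
proof (intro allI impI)
  fix r :: real
  assume "0 < r"
  then obtain M where M: "3 * eps M < r"
    using ex_three_eps_less by blast
  have "eventually (\<lambda>t. \<forall>j\<in>{..M}. \<bar>a t j - c\<bar> \<le> eps j) sequentially"
    using close by (intro eventually_ball_finite) auto
  moreover have "eventually (\<lambda>t. M \<le> n t) sequentially"
    using n by (simp add: filterlim_at_top)
  ultimately show "eventually (\<lambda>t. dist (a t (consistent_depth (a t) (n t))) c < r) sequentially"
  proof eventually_elim
    case (elim t)
    define Q where "Q m \<longleftrightarrow> m \<le> n t \<and> (\<forall>j\<le>m. \<forall>k\<le>m. \<bar>a t j - a t k\<bar> \<le> eps j + eps k)" for m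
    have "Q M"
      unfolding Q_def
    proof (intro conjI allI impI)
      fix j k
      assume "j \<le> M" "k \<le> M"
      then have "\<bar>a t j - c\<bar> \<le> eps j" "\<bar>a t k - c\<bar> \<le> eps k"
        using elim by auto
      then show "\<bar>a t j - a t k\<bar> \<le> eps j + eps k"
        by linarith
    qed (use elim in simp)
    moreover have "m \<le> n t" if "Q m" for m
      using that by (simp add: Q_def)
    ultimately have d: "Q (Greatest Q)" "M \<le> Greatest Q"
      using GreatestI_nat Greatest_le_nat by blast+
    have "\<bar>a t (Greatest Q) - a t M\<bar> \<le> eps (Greatest Q) + eps M"
      using d unfolding Q_def by blast
    moreover have "eps (Greatest Q) \<le> eps M"
      using d(2) by (rule eps_antimono)
    moreover have "\<bar>a t M - c\<bar> \<le> eps M"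
      using elim by simp
    ultimately have "\<bar>a t (Greatest Q) - c\<bar> < r"
      using M by linarith
    then show ?case
      unfolding consistent_depth_def Q_def[abs_def] by (simp add: dist_real_def)
  qed
qed

lemma cylinder_refinement:
  fixes m :: nat
  assumes R: "\<And>k Q. k < m \<Longrightarrow> Q \<subseteq> P \<Longrightarrow> Q \<noteq> {} \<Longrightarrow> \<exists>x\<in>Q. \<exists>n. R k (cylinder Q (prefix_seq x n))"
    and R_mono: "\<And>k S S'. R k S \<Longrightarrow> S' \<subseteq> S \<Longrightarrow> R k S'"
    and "P \<noteq> {}"
  shows "\<exists>x\<in>P. \<exists>n. \<forall>k<m. R k (cylinder P (prefix_seq x n))"
  using R
proof (induction m)
  case 0
  then show ?case
    using \<open>P \<noteq> {}\<close> by blast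
next
  case (Suc m)
  then obtain x n where x: "x \<in> P" and old: "\<forall>k<m. R k (cylinder P (prefix_seq x n))"
    by (metis less_Suc_eq)
  let ?Q = "cylinder P (prefix_seq x n)"
  have "?Q \<subseteq> P" "?Q \<noteq> {}"
    using x by (auto simp: cylinder_def)
  then obtain x' n' where x': "x' \<in> ?Q" and new: "R m (cylinder ?Q (prefix_seq x' n'))"
    using Suc.prems[of m ?Q] by blast
  have sub: "cylinder P (prefix_seq x' (max n n')) \<subseteq> cylinder ?Q (prefix_seq x' n')"
    "cylinder P (prefix_seq x' (max n n')) \<subseteq> ?Q"
    using x' by (auto simp: prefix_seq_eq_iff)
  have "\<forall>k<Suc m. R k (cylinder P (prefix_seq x' (max n n')))"
    using old new R_mono[OF _ sub(1)] R_mono[OF _ sub(2)] by (auto simp: less_Suc_eq)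
  then show ?case
    using x' by auto
qed

lemma oscillation_le_grid:
  fixes g :: "'b \<Rightarrow> real"
  assumes "0 < \<delta>" and range: "\<And>y. y \<in> S \<Longrightarrow> a < g y \<and> g y < a + real K * \<delta>"
    and grid: "\<And>k. k < K \<Longrightarrow> (\<forall>y\<in>S. a + real k * \<delta> \<le> g y) \<or> (\<forall>y\<in>S. g y \<le> a + real (Suc k) * \<delta>)"
  shows "oscillation_le g S (2 * \<delta>)"
proof -
  have above: "g z \<le> g y + 2 * \<delta>" if "y \<in> S" "z \<in> S" for y z
  proof -
    define k where "k = nat \<lfloor>(g y - a) / \<delta>\<rfloor> + 1"
    have "real k = real_of_int \<lfloor>(g y - a) / \<delta>\<rfloor> + 1"
      using range[OF that(1)] \<open>0 < \<delta>\<close> by (simp add: k_def)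
    then have "real k - 1 \<le> (g y - a) / \<delta>" "(g y - a) / \<delta> < real k"
      using of_int_floor_le[of "(g y - a) / \<delta>"] real_of_int_floor_add_one_gt[of "(g y - a) / \<delta>"]
      by linarith+
    then have "(real k - 1) * \<delta> \<le> g y - a" "g y - a < real k * \<delta>"
      using \<open>0 < \<delta>\<close> by (simp_all add: field_simps)
    then have k: "g y < a + real k * \<delta>" "a + real k * \<delta> \<le> g y + \<delta>"
      by (simp_all add: algebra_simps)
    show ?thesis
    proof (cases "k < K")
      case True
      have "\<not> (\<forall>y\<in>S. a + real k * \<delta> \<le> g y)"
        using k(1) that(1) by force
      then have "g z \<le> a + real k * \<delta> + \<delta>"
        using grid[OF True] that(2) by (auto simp: algebra_simps)
      then show ?thesis
        using k(2) by linarith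
    next
      case False
      then have "a + real K * \<delta> \<le> a + real k * \<delta>"
        using \<open>0 < \<delta>\<close> by simp
      then show ?thesis
        using range[OF that(2)] k \<open>0 < \<delta>\<close> by linarith
    qed
  qed
  show ?thesis
    unfolding oscillation_le_def
  proof (intro ballI)
    fix y z
    assume "y \<in> S" "z \<in> S"
    then show "\<bar>g y - g z\<bar> \<le> 2 * \<delta>"
      using above[of y z] above[of z y] by linarith
  qed
qed

lemma no_obstruction_split:
  assumes "\<not> obstruction T f" and "a < b" and "P \<subseteq> branches T" and "P \<noteq> {}"
  shows "\<exists>x\<in>P. \<exists>n. (\<forall>y\<in>cylinder P (prefix_seq x n). a \<le> f y) \<or> (\<forall>y\<in>cylinder P (prefix_seq x n). f y \<le> b)"
proof -
  have "\<not> rel_dense {y. f y < a} P \<or> \<not> rel_dense {y. b < f y} P"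
    using assms unfolding obstruction_def by blast
  then obtain x n where "x \<in> P"
    and "cylinder P (prefix_seq x n) \<inter> {y. f y < a} = {} \<or> cylinder P (prefix_seq x n) \<inter> {y. b < f y} = {}"
    unfolding rel_dense_def by blast
  moreover from this(2) have "(\<forall>y\<in>cylinder P (prefix_seq x n). a \<le> f y) \<or> (\<forall>y\<in>cylinder P (prefix_seq x n). f y \<le> b)"
    by (auto simp: disjoint_iff not_less)
  ultimately show ?thesis
    by blast
qed

lemma no_obstruction_split_arctan:
  assumes "\<not> obstruction T f" and "c < d" and "P \<subseteq> branches T" and "P \<noteq> {}"
  shows "\<exists>x\<in>P. \<exists>n. (\<forall>y\<in>cylinder P (prefix_seq x n). c \<le> arctan (f y))
                   \<or> (\<forall>y\<in>cylinder P (prefix_seq x n). arctan (f y) \<le> d)"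
proof (cases "- (pi / 2) < c \<and> d < pi / 2")
  case True
  then have "tan c < tan d"
    using \<open>c < d\<close> by (intro tan_monotone) auto
  then obtain x n where "x \<in> P" and
    "(\<forall>y\<in>cylinder P (prefix_seq x n). tan c \<le> f y) \<or> (\<forall>y\<in>cylinder P (prefix_seq x n). f y \<le> tan d)"
    using no_obstruction_split[OF assms(1) _ assms(3,4)] by blast
  moreover have "c \<le> arctan r" if "tan c \<le> r" for r
    using that arctan_le_iff[of "tan c" r] arctan_tan[of c] True \<open>c < d\<close> by simp
  moreover have "arctan r \<le> d" if "r \<le> tan d" for r
    using that arctan_le_iff[of r "tan d"] arctan_tan[of d] True \<open>c < d\<close> by simp
  ultimately show ?thesis
    by blast
next
  case False
  then consider "c \<le> - (pi / 2)" | "pi / 2 \<le> d"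
    by linarith
  then have "(\<forall>y. c \<le> arctan (f y)) \<or> (\<forall>y. arctan (f y) \<le> d)"
  proof cases
    case 1
    have "c \<le> arctan (f y)" for y
      using 1 arctan_lbound[of "f y"] by linarith
    then show ?thesis
      by blast
  next
    case 2
    have "arctan (f y) \<le> d" for y
      using 2 arctan_ubound[of "f y"] by linarith
    then show ?thesis
      by blast
  qed
  then show ?thesis
    using \<open>P \<noteq> {}\<close> by blast
qed

text \<open>arctan makes f bounded, so that finitely many levels of the grid suffice.\<close>

lemma fragmented_arctan:
  assumes "\<not> obstruction T f" and "0 < \<epsilon>"
  shows "fragmented (\<lambda>x. arctan (f x)) \<epsilon> (branches T)"
  unfolding fragmented_def
proof (intro allI impI)
  fix P
  assume P: "P \<subseteq> branches T" "P \<noteq> {}"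
  define \<delta> where "\<delta> = \<epsilon> / 2"
  define K where "K = nat \<lceil>4 / \<delta>\<rceil> + 1"
  define R where "R k S \<longleftrightarrow> (\<forall>y\<in>S. -2 + real k * \<delta> \<le> arctan (f y))
      \<or> (\<forall>y\<in>S. arctan (f y) \<le> -2 + real (Suc k) * \<delta>)" for k S
  have "0 < \<delta>"
    using \<open>0 < \<epsilon>\<close> by (simp add: \<delta>_def)
  have "4 / \<delta> < real K"
    unfolding K_def by linarith
  then have K: "2 < -2 + real K * \<delta>"
    using \<open>0 < \<delta>\<close> by (simp add: field_simps)
  have "\<exists>x\<in>P. \<exists>n. \<forall>k<K. R k (cylinder P (prefix_seq x n))"
  proof (rule cylinder_refinement)
    fix k Q
    assume "Q \<subseteq> P" "Q \<noteq> {}"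
    have "-2 + real k * \<delta> < -2 + real (Suc k) * \<delta>"
      using \<open>0 < \<delta>\<close> by simp
    moreover have "Q \<subseteq> branches T"
      using \<open>Q \<subseteq> P\<close> P by blast
    ultimately show "\<exists>x\<in>Q. \<exists>n. R k (cylinder Q (prefix_seq x n))"
      unfolding R_def by (rule no_obstruction_split_arctan[OF assms(1) _ _ \<open>Q \<noteq> {}\<close>])
  qed (use P in \<open>auto simp: R_def\<close>)
  then obtain x n where "x \<in> P" and grid: "\<forall>k<K. R k (cylinder P (prefix_seq x n))"
    by blast
  have "oscillation_le (\<lambda>x. arctan (f x)) (cylinder P (prefix_seq x n)) (2 * \<delta>)"
  proof (rule oscillation_le_grid[where a = "-2" and K = K])
    fix y
    have "- 2 < arctan (f y)" "arctan (f y) < 2"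
      using arctan_bounded[of "f y"] pi_less_4 by linarith+
    then show "-2 < arctan (f y) \<and> arctan (f y) < -2 + real K * \<delta>"
      using K by linarith
  next
    fix k
    assume "k < K"
    then show "(\<forall>y\<in>cylinder P (prefix_seq x n). -2 + real k * \<delta> \<le> arctan (f y))
      \<or> (\<forall>y\<in>cylinder P (prefix_seq x n). arctan (f y) \<le> -2 + real (Suc k) * \<delta>)"
      using grid unfolding R_def by blast
  qed (rule \<open>0 < \<delta>\<close>)
  then show "\<exists>x\<in>P. \<exists>n. oscillation_le (\<lambda>x. arctan (f x)) (cylinder P (prefix_seq x n)) \<epsilon>"
    using \<open>x \<in> P\<close> by (auto simp: \<delta>_def)
qed

definition strategy_II :: "'a list set \<Rightarrow> ((nat \<Rightarrow> 'a) \<Rightarrow> real) \<Rightarrow> 'a stratII" where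
  "strategy_II T f xs vws =
     (let a = (\<lambda>m. approx (branches T) (\<lambda>x. arctan (f x)) (eps m) xs);
          u = tan (a (consistent_depth a (length xs)))
      in (u, u))"

lemma strategy_II_winning:
  assumes "\<not> obstruction T f"
  shows "winning_II T f (strategy_II T f)"
  unfolding winning_II_def
proof (intro allI impI)
  fix x vw
  assume x: "x \<in> branches T"
    and play: "\<forall>t. vw t = strategy_II T f (prefix_seq x (Suc t)) (prefix_seq vw t)"
  define a where "a t m = approx (branches T) (\<lambda>x. arctan (f x)) (eps m) (prefix_seq x (Suc t))" for t m
  define u where "u t = tan (a t (consistent_depth (a t) (Suc t)))" for t
  have "(\<lambda>t. a t (consistent_depth (a t) (Suc t))) \<longlonglongrightarrow> arctan (f x)"
  proof (rule tendsto_consistent_depth)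
    fix m
    show "eventually (\<lambda>t. \<bar>a t m - arctan (f x)\<bar> \<le> eps m) sequentially"
      using approx_eventually_close[OF fragmented_arctan[OF assms eps_pos] x, of m]
        eventually_sequentially_Suc[where P = "\<lambda>t. \<bar>approx (branches T) (\<lambda>x. arctan (f x)) (eps m)
          (prefix_seq x t) - arctan (f x)\<bar> \<le> eps m"]
      unfolding a_def by simp
  qed (rule filterlim_Suc)
  from isCont_tendsto_compose[OF isCont_tan[OF cos_arctan_not_zero] this] have "u \<longlonglongrightarrow> f x"
    unfolding u_def by (simp add: tan_arctan)
  moreover have "vw t = (u t, u t)" for t
    using play by (simp add: strategy_II_def a_def[abs_def] u_def Let_def)
  ultimately have "(\<lambda>t. ereal (fst (vw t))) \<longlonglongrightarrow> ereal (f x)"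
    and "(\<lambda>t. ereal (snd (vw t))) \<longlonglongrightarrow> ereal (f x)"
    by simp_all
  then show "II_wins f x vw"
    unfolding II_wins_def
    using lim_imp_Limsup[OF trivial_limit_sequentially] lim_imp_Liminf[OF trivial_limit_sequentially]
    by metis
qed

theorem mainTheorem18:
  fixes A :: "'a set" and T :: "'a list set" and f :: "(nat \<Rightarrow> 'a) \<Rightarrow> real"
  assumes "countable A" and "A \<noteq> {}"
    and "pruned_tree A T"
  shows "determined_Gamma' T f"
proof (cases "obstruction T f")
  case True
  then obtain P \<alpha> \<beta> where "obstructed_game T f P \<alpha> \<beta>"
    unfolding obstruction_def obstructed_game_def by blast
  then show ?thesis
    unfolding determined_Gamma'_def using obstructed_game.strategy_winning by blast
next
  case False
  then show ?thesis
    unfolding determined_Gamma'_def using strategy_II_winning by blast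
qed

end
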